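(* Assume $K<\infty$ and let $A\subset(a,b)$ be open. For every $(u,\gamma)\in BV(a,b)\times\mathcal M(a,b)$ with $\gamma=D^su+g\mathcal L^1$, $g\in L^1(a,b)$, and $u'-g\in L^2(a,b)$, one has $$E'(u,\gamma,A)\ge2\sum_{x\in J_u\cap A}f\Big(\tfrac12|[u](x)|\Big).$$
   Context: Fix $0<a<b<\infty$, $c_0>0$, $K\in(0,\infty)$; $f(t)=c_0\min\{t,1\}$; $I_\varepsilon(x)=(x-\varepsilon,x+\varepsilon)$; $\fint_Bh=\frac1{|B|}\int_Bh$. Flat norm $\|\mu\|_{\rm flat}=\sup\{\int\varphi\,d\mu:\varphi\in W^{1,\infty}_0(a,b),\|\varphi\|_{W^{1,\infty}}\le1\}$. For $u\in BV(a,b)$: $Du=u'\mathcal L^1+D^su$, $D^su=[u]\mathcal H^0\llcorner J_u+D^cu$, $[u](x)=u(x+)-u(x-)$. For open $A\subset(a,b)$ and $(u,\gamma)\in L^1(a,b)\times\mathcal M(a,b)$: $E_\varepsilon(u,\gamma,A)=\int_A|u'-g|^2dx+\frac1\varepsilon\int_Af\big(\varepsilon\fint_{I_\varepsilon(x)\cap(a,b)}|g|dt\big)dx$ if $u\in W^{1,1}(a,b)$, $\|u\|_{L^\infty}\le K$, $\gamma=g\mathcal L^1$, $g\in L^1(a,b)$, $u'-g\in L^2(a,b)$; $+\infty$ otherwise. The localized $\Gamma$-lower limit is $E'(u,\gamma,A)=\inf\{\liminf_{\varepsilon\to0}E_\varepsilon(u_\varepsilon,\gamma_\varepsilon,A):u_\varepsilon\to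 u\text{ in }L^1(a,b),\ \|\gamma_\varepsilon-\gamma\|_{\rm flat}\to0\}$. *)

theory Defs
  imports "HOL-Analysis.Analysis"
begin

definition fcap :: "real \<Rightarrow> real \<Rightarrow> real" where
  "fcap c0 t = c0 * min t 1"

text \<open>Finite (signed) Radon measures on (a,b): a pair of finite Borel measures on the
  real line, both concentrated on (a,b); the signed measure is fst - snd.\<close>
type_synonym smeasure = "real measure \<times> real measure"

definition fin_meas_on :: "real \<Rightarrow> real \<Rightarrow> real measure \<Rightarrow> bool" where
  "fin_meas_on a b \<mu> \<longleftrightarrow> sets \<mu> = sets borel \<and> finite_measure \<mu> \<and>
      emeasure \<mu> (UNIV - {a<..<b}) = 0"

definition smeas :: "real \<Rightarrow> real \<Rightarrow> smeasure \<Rightarrow> bool" where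
  "smeas a b \<gamma> \<longleftrightarrow> fin_meas_on a b (fst \<gamma>) \<and> fin_meas_on a b (snd \<gamma>)"

definition sval :: "smeasure \<Rightarrow> real set \<Rightarrow> real" where
  "sval \<gamma> S = measure (fst \<gamma>) S - measure (snd \<gamma>) S"

definition sint :: "smeasure \<Rightarrow> (real \<Rightarrow> real) \<Rightarrow> real" where
  "sint \<gamma> \<phi> = integral\<^sup>L (fst \<gamma>) \<phi> - integral\<^sup>L (snd \<gamma>) \<phi>"

text \<open>Test functions of W^{1,infinity}_0(a,b) with norm ||phi||_inf + ||phi'||_inf <= 1
  (extended by zero outside (a,b); ||phi'||_inf is the Lipschitz constant).\<close>
definition flat_tests :: "real \<Rightarrow> real \<Rightarrow> (real \<Rightarrow> real) set" where
  "flat_tests a b = {\<phi>. (\<forall>x. x \<notin> {a<..<b} \<longrightarrow> \<phi> x = 0) \<and>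
      (\<exists>L s. lipschitz_on L UNIV \<phi> \<and> (\<forall>x. \<bar>\<phi> x\<bar> \<le> s) \<and> s + L \<le> 1)}"

definition flat_dist :: "real \<Rightarrow> real \<Rightarrow> smeasure \<Rightarrow> smeasure \<Rightarrow> real" where
  "flat_dist a b \<gamma> \<delta> = (SUP \<phi>\<in>flat_tests a b. sint \<gamma> \<phi> - sint \<delta> \<phi>)"

definition test_C1c :: "real \<Rightarrow> real \<Rightarrow> (real \<Rightarrow> real) \<Rightarrow> bool" where
  "test_C1c a b \<phi> \<longleftrightarrow> \<phi> C1_differentiable_on UNIV \<and> closure {x. \<phi> x \<noteq> 0} \<subseteq> {a<..<b}"

definition weak_deriv :: "real \<Rightarrow> real \<Rightarrow> (real \<Rightarrow> real) \<Rightarrow> (real \<Rightarrow> real) \<Rightarrow> bool" where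
  "weak_deriv a b u v \<longleftrightarrow> (\<forall>\<phi>. test_C1c a b \<phi> \<longrightarrow>
      (LINT x:{a<..<b}|lborel. u x * deriv \<phi> x) = - (LINT x:{a<..<b}|lborel. v x * \<phi> x))"

definition meas_deriv :: "real \<Rightarrow> real \<Rightarrow> (real \<Rightarrow> real) \<Rightarrow> smeasure \<Rightarrow> bool" where
  "meas_deriv a b u \<mu> \<longleftrightarrow> smeas a b \<mu> \<and> (\<forall>\<phi>. test_C1c a b \<phi> \<longrightarrow>
      (LINT x:{a<..<b}|lborel. u x * deriv \<phi> x) = - sint \<mu> \<phi>)"

definition singular_sm :: "smeasure \<Rightarrow> bool" where
  "singular_sm \<sigma> \<longleftrightarrow> (\<exists>N\<in>sets borel. emeasure lborel N = 0 \<and>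
      emeasure (fst \<sigma>) (UNIV - N) = 0 \<and> emeasure (snd \<sigma>) (UNIV - N) = 0)"

text \<open>BV(a,b) and the hypothesis gamma = D^s u + g L^1 together with u' the density of the
  absolutely continuous part of Du (Du = u' L^1 + D^s u).\<close>
definition BV_decomp :: "real \<Rightarrow> real \<Rightarrow> (real \<Rightarrow> real) \<Rightarrow> (real \<Rightarrow> real) \<Rightarrow> smeasure \<Rightarrow> bool" where
  "BV_decomp a b u u' Dsu \<longleftrightarrow> set_integrable lborel {a<..<b} u \<and>
      set_integrable lborel {a<..<b} u' \<and> smeas a b Dsu \<and> singular_sm Dsu \<and>
      (\<exists>Du. meas_deriv a b u Du \<and>
         (\<forall>S\<in>sets borel. sval Du S = (LINT x:(S \<inter> {a<..<b})|lborel. u' x) + sval Dsu S))"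

definition ap_rlim :: "(real \<Rightarrow> real) \<Rightarrow> real \<Rightarrow> real \<Rightarrow> bool" where
  "ap_rlim u x L \<longleftrightarrow> ((\<lambda>r. (LINT t:{x<..<x+r}|lborel. \<bar>u t - L\<bar>) / r) \<longlongrightarrow> 0) (at_right 0)"

definition ap_llim :: "(real \<Rightarrow> real) \<Rightarrow> real \<Rightarrow> real \<Rightarrow> bool" where
  "ap_llim u x L \<longleftrightarrow> ((\<lambda>r. (LINT t:{x-r<..<x}|lborel. \<bar>u t - L\<bar>) / r) \<longlongrightarrow> 0) (at_right 0)"

definition jump_set :: "real \<Rightarrow> real \<Rightarrow> (real \<Rightarrow> real) \<Rightarrow> real set" where
  "jump_set a b u = {x\<in>{a<..<b}. \<exists>L1 L2. ap_rlim u x L1 \<and> ap_llim u x L2 \<and> L1 \<noteq> L2}"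

definition jump :: "(real \<Rightarrow> real) \<Rightarrow> real \<Rightarrow> real" where
  "jump u x = (THE L. ap_rlim u x L) - (THE L. ap_llim u x L)"

definition avg_abs :: "real \<Rightarrow> real \<Rightarrow> real \<Rightarrow> (real \<Rightarrow> real) \<Rightarrow> real \<Rightarrow> real" where
  "avg_abs a b \<epsilon> g x = (LINT t:({x-\<epsilon><..<x+\<epsilon>} \<inter> {a<..<b})|lborel. \<bar>g t\<bar>)
      / measure lborel ({x-\<epsilon><..<x+\<epsilon>} \<inter> {a<..<b})"

text \<open>energy for given u' (weak derivative of u) and g (density of gamma)\<close>
definition energy :: "real \<Rightarrow> real \<Rightarrow> real \<Rightarrow> real \<Rightarrow> (real \<Rightarrow> real) \<Rightarrow> (real \<Rightarrow> real) \<Rightarrow> real set \<Rightarrow> ennreal" where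
  "energy a b c0 \<epsilon> u' g A =
     (\<integral>\<^sup>+ x. ennreal ((u' x - g x)\<^sup>2) * indicator A x \<partial>lborel) +
     ennreal (1 / \<epsilon>) * (\<integral>\<^sup>+ x. ennreal (fcap c0 (\<epsilon> * avg_abs a b \<epsilon> g x)) * indicator A x \<partial>lborel)"

definition E_adm :: "real \<Rightarrow> real \<Rightarrow> real \<Rightarrow> (real \<Rightarrow> real) \<Rightarrow> smeasure \<Rightarrow> (real \<Rightarrow> real) \<Rightarrow> (real \<Rightarrow> real) \<Rightarrow> bool" where
  "E_adm a b K u \<gamma> u' g \<longleftrightarrow>
     set_integrable lborel {a<..<b} u \<and> set_integrable lborel {a<..<b} u' \<and> weak_deriv a b u u' \<and>
     (AE x in lborel. x \<in> {a<..<b} \<longrightarrow> \<bar>u x\<bar> \<le> K) \<and>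
     smeas a b \<gamma> \<and> set_integrable lborel {a<..<b} g \<and>
     (\<forall>S\<in>sets borel. sval \<gamma> S = (LINT x:(S \<inter> {a<..<b})|lborel. g x)) \<and>
     set_integrable lborel {a<..<b} (\<lambda>x. (u' x - g x)\<^sup>2)"

text \<open>E_eps(u,gamma,A); the value does not depend on the choice of the a.e.-determined
  u', g, and it is +infinity (Inf of the empty set) when no admissible u', g exist.\<close>
definition E_eps :: "real \<Rightarrow> real \<Rightarrow> real \<Rightarrow> real \<Rightarrow> real \<Rightarrow> (real \<Rightarrow> real) \<Rightarrow> smeasure \<Rightarrow> real set \<Rightarrow> ennreal" where
  "E_eps a b K c0 \<epsilon> u \<gamma> A =
     (INF p\<in>{(u', g). E_adm a b K u \<gamma> u' g}. energy a b c0 \<epsilon> (fst p) (snd p) A)"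

definition E_low :: "real \<Rightarrow> real \<Rightarrow> real \<Rightarrow> real \<Rightarrow> (real \<Rightarrow> real) \<Rightarrow> smeasure \<Rightarrow> real set \<Rightarrow> ennreal" where
  "E_low a b K c0 u \<gamma> A =
     (INF p\<in>{(U, \<Gamma>). (\<forall>\<epsilon>>0. set_integrable lborel {a<..<b} (U \<epsilon>) \<and> smeas a b (\<Gamma> \<epsilon>)) \<and>
               ((\<lambda>\<epsilon>. LINT x:{a<..<b}|lborel. \<bar>U \<epsilon> x - u x\<bar>) \<longlongrightarrow> 0) (at_right 0) \<and>
               ((\<lambda>\<epsilon>. flat_dist a b (\<Gamma> \<epsilon>) \<gamma>) \<longlongrightarrow> 0) (at_right 0)}.
        Liminf (at_right 0) (\<lambda>\<epsilon>. E_eps a b K c0 \<epsilon> ((fst p) \<epsilon>) ((snd p) \<epsilon>) A))"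

end

theory Submission
  imports Defs
begin

(*
  Fix finitely many jump points x of u in A and surround them by disjoint intervals.
  Testing against the derivative of a bump of radius \<eta> centred at x recovers the jump
  [u](x) up to a small error, and by L^1 convergence the same holds for the approximating
  functions U.  By the weak-derivative identity this test value is at most the integral
  of |u'| over (x - \<eta>, x + \<eta>), u' the weak derivative of U, hence at most the mass m
  of |g| there plus the L^1 norm of u' - g, which Young's inequality bounds by the elastic
  energy.  Finally, Fubini and the concavity of f bound the nonlocal term on a slightly
  larger interval from below by 2 f(m/2).  Summing over the separated points gives the
  estimate for finite subsets of the jump set, and the infinite sum is their supremum.
*)

lemma DERIV_times_abs: "((\<lambda>t::real. t * \<bar>t\<bar>) has_real_derivative 2 * \<bar>t\<bar>) (at t)"
proof (cases "t = 0")
  case True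
  have "((\<lambda>y::real. (y * \<bar>y\<bar> - 0 * \<bar>0\<bar>) / (y - 0)) \<longlongrightarrow> 0) (at 0)"
  proof -
    have "((\<lambda>y::real. \<bar>y\<bar>) \<longlongrightarrow> 0) (at 0)"
      using tendsto_rabs_zero[OF tendsto_ident_at[of 0 UNIV]] by simp
    then show ?thesis
      by (rule Lim_transform_eventually) (auto simp: eventually_at_filter)
  qed
  then show ?thesis using True by (simp add: has_field_derivative_iff)
next
  case False
  show ?thesis
  proof (cases "t > 0")
    case True
    have "((\<lambda>t::real. t * t) has_real_derivative 2 * \<bar>t\<bar>) (at t)"
      using DERIV_mult[OF DERIV_ident DERIV_ident, of t] True by simp
    then show ?thesis
      by (rule has_field_derivative_transform_within_open[where S="{0<..}"]) (use True in auto)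
  next
    case False
    then have "t < 0" using \<open>t \<noteq> 0\<close> by auto
    have "((\<lambda>t::real. - t * t) has_real_derivative (- 1) * t + 1 * (- t)) (at t)"
      by (rule DERIV_mult) (auto intro!: derivative_eq_intros)
    then have "((\<lambda>t::real. - t * t) has_real_derivative 2 * \<bar>t\<bar>) (at t)"
      using \<open>t < 0\<close> by simp
    then show ?thesis
      by (rule has_field_derivative_transform_within_open[where S="{..<0}"]) (use \<open>t < 0\<close> in auto)
  qed
qed

text \<open>The profile \<open>max 0 (1 - s\<^sup>2) ^ 2\<close>, written with \<open>t * \<bar>t\<bar>\<close> so that
  its derivative can be computed by the chain rule.\<close>

definition bump :: "real \<Rightarrow> real" where
  "bump s = ((1 - s\<^sup>2) * (1 - s\<^sup>2) + (1 - s\<^sup>2) * \<bar>1 - s\<^sup>2\<bar>) / 2"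

definition bump' :: "real \<Rightarrow> real" where
  "bump' s = - 2 * s * ((1 - s\<^sup>2) + \<bar>1 - s\<^sup>2\<bar>)"

lemma has_real_derivative_bump: "(bump has_real_derivative bump' s) (at s)"
proof -
  have h: "((\<lambda>s. 1 - s\<^sup>2) has_real_derivative - 2 * s) (at s)"
    by (auto intro!: derivative_eq_intros)
  have "((\<lambda>s. (1 - s\<^sup>2) * \<bar>1 - s\<^sup>2\<bar>) has_real_derivative 2 * \<bar>1 - s\<^sup>2\<bar> * (- 2 * s)) (at s)"
    using DERIV_chain2[OF DERIV_times_abs h] by simp
  from DERIV_cdivide[OF DERIV_add[OF DERIV_mult[OF h h] this], of 2]
  have "(bump has_real_derivative ((- 2 * s) * (1 - s\<^sup>2) + (- 2 * s) * (1 - s\<^sup>2)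
      + 2 * \<bar>1 - s\<^sup>2\<bar> * (- 2 * s)) / 2) (at s)"
    unfolding bump_def[abs_def] .
  moreover have "((- 2 * s) * (1 - s\<^sup>2) + (- 2 * s) * (1 - s\<^sup>2)
      + 2 * \<bar>1 - s\<^sup>2\<bar> * (- 2 * s)) / 2 = bump' s"
    unfolding bump'_def by (simp add: field_simps)
  ultimately show ?thesis by simp
qed

lemma bump_eq_0: "1 \<le> \<bar>s\<bar> \<Longrightarrow> bump s = 0"
  and bump'_eq_0: "1 \<le> \<bar>s\<bar> \<Longrightarrow> bump' s = 0"
proof -
  assume "1 \<le> \<bar>s\<bar>"
  then have "1 \<le> s\<^sup>2" using abs_le_square_iff[of 1 s] by simp
  then have "\<bar>1 - s\<^sup>2\<bar> = - (1 - s\<^sup>2)" by simp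
  then show "bump s = 0" "bump' s = 0"
    unfolding bump_def bump'_def by (simp_all only:) (simp_all add: algebra_simps)
qed

lemma bump_0 [simp]: "bump 0 = 1"
  and bump'_0 [simp]: "bump' 0 = 0"
  by (simp_all add: bump_def bump'_def)

lemma abs_bump_le: "\<bar>bump s\<bar> \<le> 1"
  and abs_bump'_le: "\<bar>bump' s\<bar> \<le> 4"
proof (atomize (full), cases "1 \<le> \<bar>s\<bar>")
  case True
  then show "\<bar>bump s\<bar> \<le> 1 \<and> \<bar>bump' s\<bar> \<le> 4"
    by (simp add: bump_eq_0 bump'_eq_0)
next
  case False
  then have "s\<^sup>2 \<le> 1" using abs_le_square_iff[of s 1] by simp
  then have h: "0 \<le> 1 - s\<^sup>2" "1 - s\<^sup>2 \<le> 1" by auto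
  have "bump s = (1 - s\<^sup>2) * (1 - s\<^sup>2)" unfolding bump_def using h by simp
  then have "\<bar>bump s\<bar> \<le> 1" using h mult_le_one[of "1 - s\<^sup>2" "1 - s\<^sup>2"] by simp
  moreover have "\<bar>bump' s\<bar> = 4 * (\<bar>s\<bar> * (1 - s\<^sup>2))" unfolding bump'_def using h
    by (simp add: abs_mult)
  moreover have "\<bar>s\<bar> * (1 - s\<^sup>2) \<le> 1"
    using False h mult_le_one[of "\<bar>s\<bar>" "1 - s\<^sup>2"] by simp
  ultimately show "\<bar>bump s\<bar> \<le> 1 \<and> \<bar>bump' s\<bar> \<le> 4" by simp
qed

lemma continuous_on_bump': "continuous_on UNIV bump'"
  unfolding bump'_def by (intro continuous_intros)

definition bump_at :: "real \<Rightarrow> real \<Rightarrow> real \<Rightarrow> real" where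
  "bump_at x \<eta> y = bump ((y - x) / \<eta>)"

definition bump_at' :: "real \<Rightarrow> real \<Rightarrow> real \<Rightarrow> real" where
  "bump_at' x \<eta> y = bump' ((y - x) / \<eta>) / \<eta>"

lemma has_real_derivative_bump_at: "(bump_at x \<eta> has_real_derivative bump_at' x \<eta> y) (at y)"
proof -
  have "((\<lambda>y. (y - x) / \<eta>) has_real_derivative 1 / \<eta>) (at y)"
    by (rule DERIV_cdivide) (auto intro!: derivative_eq_intros)
  from DERIV_chain2[OF has_real_derivative_bump this] show ?thesis
    unfolding bump_at_def[abs_def] bump_at'_def by simp
qed

lemma
  assumes "\<eta> > 0" and "y \<notin> {x-\<eta><..<x+\<eta>}"
  shows bump_at_eq_0: "bump_at x \<eta> y = 0"
    and bump_at'_eq_0: "bump_at' x \<eta> y = 0"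
proof -
  have "\<eta> \<le> \<bar>y - x\<bar>" using assms(2) by auto
  then have "1 \<le> \<bar>(y - x) / \<eta>\<bar>" using assms(1) by (simp add: abs_divide le_divide_eq)
  then show "bump_at x \<eta> y = 0" "bump_at' x \<eta> y = 0"
    unfolding bump_at_def bump_at'_def by (simp_all add: bump_eq_0 bump'_eq_0)
qed

lemma abs_bump_at_le: "\<bar>bump_at x \<eta> y\<bar> \<le> 1"
  unfolding bump_at_def by (rule abs_bump_le)

lemma abs_bump_at'_le: "\<eta> > 0 \<Longrightarrow> \<bar>bump_at' x \<eta> y\<bar> \<le> 4 / \<eta>"
  unfolding bump_at'_def using abs_bump'_le[of "(y - x) / \<eta>"]
  by (simp add: divide_right_mono)

lemma bump_at'_centre [simp]: "bump_at' x \<eta> x = 0"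
  unfolding bump_at'_def by simp

lemma continuous_on_bump_at: "continuous_on UNIV (bump_at x \<eta>)"
  by (intro continuous_at_imp_continuous_on ballI DERIV_isCont[OF has_real_derivative_bump_at])

lemma continuous_on_bump_at': "continuous_on UNIV (bump_at' x \<eta>)"
proof -
  have "continuous_on UNIV (\<lambda>y. bump' ((y - x) / \<eta>))"
    by (rule continuous_on_compose2[OF continuous_on_bump'])
       (cases "\<eta> = 0", auto intro!: continuous_intros)
  then have "continuous_on UNIV (\<lambda>y. (1 / \<eta>) * bump' ((y - x) / \<eta>))"
    by (rule continuous_on_mult_left)
  then show ?thesis
    unfolding bump_at'_def[abs_def] by simp
qed

lemma borel_measurable_bump_at [measurable]: "bump_at x \<eta> \<in> borel_measurable borel"
  and borel_measurable_bump_at' [measurable]: "bump_at' x \<eta> \<in> borel_measurable borel"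
  by (intro borel_measurable_continuous_onI continuous_on_bump_at continuous_on_bump_at')+

lemma test_C1c_bump_at:
  assumes "\<eta> > 0" "a < x - \<eta>" "x + \<eta> < b"
  shows "test_C1c a b (bump_at x \<eta>)"
  unfolding test_C1c_def
proof
  have "vector_derivative (bump_at x \<eta>) (at y) = bump_at' x \<eta> y" for y
    by (rule vector_derivative_at)
       (simp add: has_real_derivative_bump_at has_real_derivative_iff_has_vector_derivative[symmetric])
  moreover have "bump_at x \<eta> differentiable at y" for y
    using has_real_derivative_bump_at real_differentiable_def by blast
  ultimately show "bump_at x \<eta> C1_differentiable_on UNIV"
    unfolding C1_differentiable_on_eq using continuous_on_bump_at' by simp
  have "{y. bump_at x \<eta> y \<noteq> 0} \<subseteq> {x-\<eta>..x+\<eta>}"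
  proof
    fix y assume "y \<in> {y. bump_at x \<eta> y \<noteq> 0}"
    then have "y \<in> {x-\<eta><..<x+\<eta>}" using bump_at_eq_0[OF assms(1)] by blast
    then show "y \<in> {x-\<eta>..x+\<eta>}" by auto
  qed
  then have "closure {y. bump_at x \<eta> y \<noteq> 0} \<subseteq> {x-\<eta>..x+\<eta>}"
    by (rule closure_minimal) auto
  then show "closure {y. bump_at x \<eta> y \<noteq> 0} \<subseteq> {a<..<b}"
    using assms by auto
qed

lemma integral_bump_at'_atLeastAtMost:
  assumes "c \<le> d"
  shows "integral\<^sup>L lborel (\<lambda>y. indicator {c..d} y * bump_at' x \<eta> y) = bump_at x \<eta> d - bump_at x \<eta> c"
  using integral_FTC_atLeastAtMost[OF assms, of "bump_at x \<eta>" "bump_at' x \<eta>"]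
    has_real_derivative_bump_at continuous_on_subset[OF continuous_on_bump_at']
  by (simp add: has_real_derivative_iff_has_vector_derivative[symmetric] has_field_derivative_at_within)

lemma integral_bump_at'_left: "\<eta> > 0 \<Longrightarrow> integral\<^sup>L lborel (\<lambda>y. indicator {x-\<eta>..x} y * bump_at' x \<eta> y) = 1"
  and integral_bump_at'_right: "\<eta> > 0 \<Longrightarrow> integral\<^sup>L lborel (\<lambda>y. indicator {x..x+\<eta>} y * bump_at' x \<eta> y) = -1"
  by (simp_all add: integral_bump_at'_atLeastAtMost bump_at_eq_0) (simp_all add: bump_at_def)

lemma borel_measurable_set_integrable:
  "set_integrable lborel S (f :: real \<Rightarrow> real) \<Longrightarrow> (\<lambda>y. indicator S y * f y) \<in> borel_measurable lborel"
  using borel_measurable_integrable[of lborel "\<lambda>x. indicator S x *\<^sub>R f x"]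
  unfolding set_integrable_def by simp

lemma set_integrable_const_interval: "set_integrable lborel {c<..<d :: real} (\<lambda>_. K :: real)"
proof -
  have "set_integrable lborel {c..d} (\<lambda>_. K)"
    by (rule borel_integrable_atLeastAtMost') (rule continuous_on_const)
  then show ?thesis by (rule set_integrable_subset) auto
qed

lemma set_integrable_diff_const:
  fixes u :: "real \<Rightarrow> real"
  assumes "set_integrable lborel {a<..<b} u" "a \<le> c" "d \<le> b"
  shows "set_integrable lborel {c<..<d} (\<lambda>t. u t - L)"
proof -
  have "set_integrable lborel {c<..<d} u"
    by (rule set_integrable_subset[OF assms(1)]) (use assms in auto)
  then show ?thesis by (intro set_integral_diff(1) set_integrable_const_interval)
qed

lemma set_integrable_mult_bounded:
  fixes f w :: "real \<Rightarrow> real"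
  assumes f: "set_integrable lborel S f" and [measurable]: "w \<in> borel_measurable borel"
    and w: "\<And>y. \<bar>w y\<bar> \<le> B"
  shows "set_integrable lborel S (\<lambda>y. f y * w y)"
proof -
  have "integrable lborel (\<lambda>y. indicator S y * f y * w y)"
  proof (rule Bochner_Integration.integrable_bound)
    show "integrable lborel (\<lambda>y. B * (indicator S y * f y))"
      using f unfolding set_integrable_def by simp
    show "(\<lambda>y. indicator S y * f y * w y) \<in> borel_measurable lborel"
      using borel_measurable_set_integrable[OF f] by measurable
    have "\<bar>indicator S y * f y * w y\<bar> \<le> \<bar>B * (indicator S y * f y)\<bar>" for y
      using mult_right_mono[OF w[of y], of "\<bar>indicator S y * f y\<bar>"] w[of y]
      unfolding abs_mult by (simp add: mult_ac)
    then show "AE y in lborel. norm (indicator S y * f y * w y) \<le> norm (B * (indicator S y * f y))"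
      by simp
  qed
  then show ?thesis unfolding set_integrable_def by (simp add: mult.assoc)
qed

lemma abs_set_integral_mult_le:
  fixes f w :: "real \<Rightarrow> real"
  assumes f: "set_integrable lborel S f" and w: "w \<in> borel_measurable borel" "\<And>y. \<bar>w y\<bar> \<le> B"
  shows "\<bar>LINT y:S|lborel. f y * w y\<bar> \<le> B * (LINT y:S|lborel. \<bar>f y\<bar>)"
proof -
  have "\<bar>LINT y:S|lborel. f y * w y\<bar> \<le> (LINT y:S|lborel. \<bar>f y * w y\<bar>)"
    using set_integral_norm_bound[OF set_integrable_mult_bounded[OF f w]] by simp
  also have "\<dots> \<le> (LINT y:S|lborel. B * \<bar>f y\<bar>)"
    using set_integrable_mult_bounded[OF f w] set_integrable_abs[OF f]
      mult_left_mono[OF w(2), of "\<bar>f _\<bar>"]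
    by (intro set_integral_mono set_integrable_abs) (auto simp: abs_mult mult.commute)
  finally show ?thesis by simp
qed

lemma abs_set_integral_diff_mult_le:
  fixes f f' w :: "real \<Rightarrow> real"
  assumes f: "set_integrable lborel S f" "set_integrable lborel S f'"
    and w: "w \<in> borel_measurable borel" "\<And>y. \<bar>w y\<bar> \<le> B"
  shows "\<bar>(LINT y:S|lborel. f' y * w y) - (LINT y:S|lborel. f y * w y)\<bar>
    \<le> B * (LINT y:S|lborel. \<bar>f' y - f y\<bar>)"
proof -
  have "(LINT y:S|lborel. f' y * w y) - (LINT y:S|lborel. f y * w y)
      = (LINT y:S|lborel. (f' y - f y) * w y)"
    using set_integral_diff(2)[OF set_integrable_mult_bounded[OF f(2) w]
        set_integrable_mult_bounded[OF f(1) w]]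
    by (simp add: left_diff_distrib)
  then show ?thesis
    using abs_set_integral_mult_le[OF set_integral_diff(1)[OF f(2) f(1)] w] by simp
qed

lemma abs_integral_bump_at'_le_weak_deriv:
  assumes wd: "weak_deriv a b U u'" and u': "set_integrable lborel {a<..<b} u'"
    and \<eta>: "\<eta> > 0" "a < x - \<eta>" "x + \<eta> < b"
  shows "\<bar>LINT y:{a<..<b}|lborel. U y * bump_at' x \<eta> y\<bar> \<le> (LINT y:{x-\<eta><..<x+\<eta>}|lborel. \<bar>u' y\<bar>)"
proof -
  have "deriv (bump_at x \<eta>) = bump_at' x \<eta>"
    using DERIV_imp_deriv[OF has_real_derivative_bump_at] by blast
  then have "(LINT y:{a<..<b}|lborel. U y * bump_at' x \<eta> y) = - (LINT y:{a<..<b}|lborel. u' y * bump_at x \<eta> y)"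
    using wd test_C1c_bump_at[OF \<eta>] unfolding weak_deriv_def by metis
  also have "(LINT y:{a<..<b}|lborel. u' y * bump_at x \<eta> y) = (LINT y:{x-\<eta><..<x+\<eta>}|lborel. u' y * bump_at x \<eta> y)"
    unfolding set_lebesgue_integral_def
  proof (intro Bochner_Integration.integral_cong refl)
    fix y
    show "indicator {a<..<b} y *\<^sub>R (u' y * bump_at x \<eta> y) = indicator {x-\<eta><..<x+\<eta>} y *\<^sub>R (u' y * bump_at x \<eta> y)"
      by (cases "y \<in> {x-\<eta><..<x+\<eta>}") (use \<eta> in \<open>auto simp: bump_at_eq_0\<close>)
  qed
  finally have "(LINT y:{a<..<b}|lborel. U y * bump_at' x \<eta> y)
      = - (LINT y:{x-\<eta><..<x+\<eta>}|lborel. u' y * bump_at x \<eta> y)" .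
  moreover have "{x-\<eta><..<x+\<eta>} \<subseteq> {a<..<b}" using \<eta> by auto
  ultimately show ?thesis
    using abs_set_integral_mult_le[OF set_integrable_subset[OF u'] borel_measurable_bump_at abs_bump_at_le,
        of "{x-\<eta><..<x+\<eta>}" x \<eta>]
    by simp
qed

lemma abs_integral_bump_at'_sub_jump_le:
  fixes u :: "real \<Rightarrow> real"
  assumes \<eta>: "\<eta> > 0" and ab: "a < x - \<eta>" "x + \<eta> < b" and u: "set_integrable lborel {a<..<b} u"
  shows "\<bar>(LINT y:{a<..<b}|lborel. u y * bump_at' x \<eta> y) - (L2 - L1)\<bar> \<le>
     4 / \<eta> * ((LINT t:{x-\<eta><..<x}|lborel. \<bar>u t - L2\<bar>) + (LINT t:{x<..<x+\<eta>}|lborel. \<bar>u t - L1\<bar>))"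
proof -
  let ?w = "bump_at' x \<eta>"
  define V where "V y = indicator {x-\<eta>..x} y * ?w y * L2 + indicator {x..x+\<eta>} y * ?w y * L1" for y
  have int_w: "integrable lborel (\<lambda>y. indicator {c..d} y * ?w y)" for c d
    using borel_integrable_atLeastAtMost'[OF continuous_on_subset[OF continuous_on_bump_at' subset_UNIV]]
    unfolding set_integrable_def by simp
  have int_V: "integrable lborel V" and integral_V: "integral\<^sup>L lborel V = L2 - L1"
    using int_w[of "x-\<eta>" x] int_w[of x "x+\<eta>"]
      integral_bump_at'_left[OF \<eta>, of x] integral_bump_at'_right[OF \<eta>, of x]
    unfolding V_def by simp_all
  have u_left: "set_integrable lborel {x-\<eta><..<x} (\<lambda>t. u t - L2)"
    and u_right: "set_integrable lborel {x<..<x+\<eta>} (\<lambda>t. u t - L1)"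
    using set_integrable_diff_const[OF u] ab \<eta> by auto
  have int_P: "integrable lborel (\<lambda>y. indicator {a<..<b} y * (u y * ?w y))"
    using set_integrable_mult_bounded[OF u borel_measurable_bump_at' abs_bump_at'_le[OF \<eta>]]
    unfolding set_integrable_def by simp
  have split: "indicator {a<..<b} y * (u y * ?w y) - V y
      = indicator {x-\<eta><..<x} y * ((u y - L2) * ?w y) + indicator {x<..<x+\<eta>} y * ((u y - L1) * ?w y)" for y
  proof -
    consider "y \<in> {x-\<eta><..<x}" | "y = x" | "y \<in> {x<..<x+\<eta>}" | "y \<notin> {x-\<eta><..<x+\<eta>}"
      by force
    then show ?thesis
      by cases (use ab in \<open>auto simp: V_def bump_at'_eq_0[OF \<eta>] algebra_simps\<close>)
  qed
  have "(LINT y:{a<..<b}|lborel. u y * ?w y) - (L2 - L1)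
      = (LBINT y. indicator {a<..<b} y * (u y * ?w y) - V y)"
    using int_P int_V integral_V by (simp add: set_lebesgue_integral_def)
  also have "\<dots> = (LINT y:{x-\<eta><..<x}|lborel. (u y - L2) * ?w y) + (LINT y:{x<..<x+\<eta>}|lborel. (u y - L1) * ?w y)"
    unfolding split set_lebesgue_integral_def
    using set_integrable_mult_bounded[OF u_left borel_measurable_bump_at' abs_bump_at'_le[OF \<eta>]]
      set_integrable_mult_bounded[OF u_right borel_measurable_bump_at' abs_bump_at'_le[OF \<eta>]]
    by (simp add: set_integrable_def)
  finally have "\<bar>(LINT y:{a<..<b}|lborel. u y * ?w y) - (L2 - L1)\<bar>
      \<le> \<bar>LINT y:{x-\<eta><..<x}|lborel. (u y - L2) * ?w y\<bar> + \<bar>LINT y:{x<..<x+\<eta>}|lborel. (u y - L1) * ?w y\<bar>"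
    by simp
  then show ?thesis
    using abs_set_integral_mult_le[OF u_left borel_measurable_bump_at' abs_bump_at'_le[OF \<eta>, of x]]
      abs_set_integral_mult_le[OF u_right borel_measurable_bump_at' abs_bump_at'_le[OF \<eta>, of x]]
    by (simp add: distrib_left)
qed

lemma approx_limit_unique:
  fixes u l :: "real \<Rightarrow> real"
  assumes u: "set_integrable lborel {a<..<b} u" and c: "c > 0"
    and l: "\<And>r. 0 < r \<Longrightarrow> r < c \<Longrightarrow> a \<le> l r \<and> l r + r \<le> b"
    and L: "((\<lambda>r. (LINT t:{l r<..<l r + r}|lborel. \<bar>u t - L\<bar>) / r) \<longlongrightarrow> 0) (at_right 0)"
    and L': "((\<lambda>r. (LINT t:{l r<..<l r + r}|lborel. \<bar>u t - L'\<bar>) / r) \<longlongrightarrow> 0) (at_right 0)"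
  shows "L = L'"
proof -
  let ?avg = "\<lambda>L r. (LINT t:{l r<..<l r + r}|lborel. \<bar>u t - L\<bar>) / r"
  have "((\<lambda>r. ?avg L r + ?avg L' r) \<longlongrightarrow> 0 + 0) (at_right 0)"
    using L L' by (rule tendsto_add)
  moreover have "eventually (\<lambda>r. \<bar>L - L'\<bar> \<le> ?avg L r + ?avg L' r) (at_right 0)"
    using eventually_at_right_real[OF c]
  proof (rule eventually_mono)
    fix r assume r: "r \<in> {0<..<c}"
    then have lr: "a \<le> l r" "l r + r \<le> b" using l by auto
    have iL: "set_integrable lborel {l r<..<l r + r} (\<lambda>t. \<bar>u t - L\<bar>)" for L
      using set_integrable_abs[OF set_integrable_diff_const[OF u lr]] .
    have "r * \<bar>L - L'\<bar> = (LINT t:{l r<..<l r + r}|lborel. \<bar>L - L'\<bar>)"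
      using r by (simp add: set_integral_const)
    also have "\<dots> \<le> (LINT t:{l r<..<l r + r}|lborel. \<bar>u t - L\<bar> + \<bar>u t - L'\<bar>)"
      using iL[of L] iL[of L']
      by (intro set_integral_mono set_integral_add set_integrable_const_interval) auto
    also have "\<dots> = (LINT t:{l r<..<l r + r}|lborel. \<bar>u t - L\<bar>) + (LINT t:{l r<..<l r + r}|lborel. \<bar>u t - L'\<bar>)"
      by (rule set_integral_add(2)[OF iL iL])
    finally show "\<bar>L - L'\<bar> \<le> ?avg L r + ?avg L' r"
      using r by (simp add: pos_le_divide_eq add_divide_distrib[symmetric] mult.commute)
  qed
  ultimately have "\<bar>L - L'\<bar> \<le> 0 + 0"
    by (rule tendsto_lowerbound) simp
  then show ?thesis by simp
qed

lemma jump_eq_approx_limits: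
  fixes u :: "real \<Rightarrow> real"
  assumes x: "x \<in> jump_set a b u" and u: "set_integrable lborel {a<..<b} u"
  obtains L1 L2 where "ap_rlim u x L1" "ap_llim u x L2" "jump u x = L1 - L2"
proof -
  from x obtain L1 L2 where x: "x \<in> {a<..<b}" and L: "ap_rlim u x L1" "ap_llim u x L2"
    unfolding jump_set_def by auto
  have "(THE L. ap_rlim u x L) = L1"
  proof (rule the_equality[where P="ap_rlim u x", OF L(1)])
    show "L = L1" if "ap_rlim u x L" for L
      by (rule approx_limit_unique[OF u, where l="\<lambda>_. x" and c="b - x"])
         (use x that L(1) in \<open>auto simp: ap_rlim_def\<close>)
  qed
  moreover have "(THE L. ap_llim u x L) = L2"
  proof (rule the_equality[where P="ap_llim u x", OF L(2)])
    show "L = L2" if "ap_llim u x L" for L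
      by (rule approx_limit_unique[OF u, where l="\<lambda>r. x - r" and c="x - a"])
         (use x that L(2) in \<open>auto simp: ap_llim_def\<close>)
  qed
  ultimately show ?thesis using L that unfolding jump_def by simp
qed

lemma exists_bump_at_detecting_jump:
  fixes u :: "real \<Rightarrow> real"
  assumes x: "x \<in> jump_set a b u" and u: "set_integrable lborel {a<..<b} u"
    and d: "d > 0" and \<eta>0: "\<eta>0 > 0"
  obtains \<eta> where "0 < \<eta>" "\<eta> < \<eta>0" "a < x - \<eta>" "x + \<eta> < b"
    "\<bar>(LINT y:{a<..<b}|lborel. u y * bump_at' x \<eta> y) + jump u x\<bar> \<le> d"
proof -
  obtain L1 L2 where L: "ap_rlim u x L1" "ap_llim u x L2" and J: "jump u x = L1 - L2"
    using jump_eq_approx_limits[OF x u] .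
  define avg where "avg r = (LINT t:{x-r<..<x}|lborel. \<bar>u t - L2\<bar>) / r
    + (LINT t:{x<..<x+r}|lborel. \<bar>u t - L1\<bar>) / r" for r
  have "((\<lambda>r. 4 * avg r) \<longlongrightarrow> 4 * (0 + 0)) (at_right 0)"
    using L unfolding ap_rlim_def ap_llim_def avg_def by (intro tendsto_intros)
  then have "eventually (\<lambda>r. 4 * avg r < d) (at_right 0)"
    using d by (auto dest: order_tendstoD(2))
  moreover have "x \<in> {a<..<b}" using x unfolding jump_set_def by auto
  then have "min \<eta>0 (min (x - a) (b - x)) > 0" using \<eta>0 by auto
  ultimately have "eventually (\<lambda>r. r \<in> {0<..<min \<eta>0 (min (x - a) (b - x))} \<and> 4 * avg r < d) (at_right 0)"
    by (intro eventually_conj eventually_at_right_real)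
  then obtain \<eta> where \<eta>: "\<eta> \<in> {0<..<min \<eta>0 (min (x - a) (b - x))}" "4 * avg \<eta> < d"
    using eventually_happens'[of "at_right (0::real)"] by auto
  then have ab: "a < x - \<eta>" "x + \<eta> < b" by auto
  have "\<bar>(LINT y:{a<..<b}|lborel. u y * bump_at' x \<eta> y) - (L2 - L1)\<bar> \<le> 4 * avg \<eta>"
    using abs_integral_bump_at'_sub_jump_le[OF _ ab u, of L2 L1] \<eta>
    by (simp add: avg_def field_simps)
  moreover have "(LINT y:{a<..<b}|lborel. u y * bump_at' x \<eta> y) + jump u x
      = (LINT y:{a<..<b}|lborel. u y * bump_at' x \<eta> y) - (L2 - L1)"
    using J by simp
  ultimately show ?thesis
    using that \<eta> ab by auto
qed

lemma exists_bump_radii_detecting_jumps: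
  fixes u :: "real \<Rightarrow> real"
  assumes F: "F \<subseteq> jump_set a b u" and u: "set_integrable lborel {a<..<b} u"
    and d: "d > 0" and \<eta>0: "\<eta>0 > 0"
  obtains \<eta> where "\<And>x. x \<in> F \<Longrightarrow> 0 < \<eta> x \<and> \<eta> x < \<eta>0 \<and> a < x - \<eta> x \<and> x + \<eta> x < b \<and>
    \<bar>(LINT y:{a<..<b}|lborel. u y * bump_at' x (\<eta> x) y) + jump u x\<bar> \<le> d"
proof -
  have "\<forall>x\<in>F. \<exists>\<eta>. 0 < \<eta> \<and> \<eta> < \<eta>0 \<and> a < x - \<eta> \<and> x + \<eta> < b \<and>
      \<bar>(LINT y:{a<..<b}|lborel. u y * bump_at' x \<eta> y) + jump u x\<bar> \<le> d"
    using exists_bump_at_detecting_jump[OF _ u d \<eta>0] F by (metis subsetD)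
  then have "\<exists>\<eta>. \<forall>x\<in>F. 0 < \<eta> x \<and> \<eta> x < \<eta>0 \<and> a < x - \<eta> x \<and> x + \<eta> x < b \<and>
      \<bar>(LINT y:{a<..<b}|lborel. u y * bump_at' x (\<eta> x) y) + jump u x\<bar> \<le> d"
    by (rule bchoice)
  then show ?thesis using that by blast
qed

lemma set_integral_abs_le_Young:
  fixes h :: "real \<Rightarrow> real"
  assumes h: "set_integrable lborel {c<..<d} h" "set_integrable lborel {c<..<d} (\<lambda>t. (h t)\<^sup>2)"
    and "c \<le> d" and lam: "lam > 0"
  shows "(LINT t:{c<..<d}|lborel. \<bar>h t\<bar>) \<le> (LINT t:{c<..<d}|lborel. (h t)\<^sup>2) / (2 * lam) + lam * (d - c) / 2"
proof -
  have "\<bar>h t\<bar> \<le> (h t)\<^sup>2 / (2 * lam) + lam / 2" for t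
  proof -
    have "0 \<le> (\<bar>h t\<bar> - lam)\<^sup>2" by simp
    then show ?thesis using lam by (simp add: field_simps power2_eq_square)
  qed
  then have "(LINT t:{c<..<d}|lborel. \<bar>h t\<bar>) \<le> (LINT t:{c<..<d}|lborel. (h t)\<^sup>2 / (2 * lam) + lam / 2)"
    using h by (intro set_integral_mono set_integrable_abs set_integral_add set_integrable_const_interval) auto
  also have "\<dots> = (LINT t:{c<..<d}|lborel. (h t)\<^sup>2) / (2 * lam) + (d - c) * (lam / 2)"
    using h \<open>c \<le> d\<close>
    by (subst set_integral_add(2)) (auto intro: set_integrable_const_interval simp: set_integral_const)
  finally show ?thesis by (simp add: field_simps)
qed

lemma set_integral_le_of_nn_integral_le:
  fixes f :: "real \<Rightarrow> real"
  assumes f: "set_integrable lborel S f" "\<And>x. 0 \<le> f x"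
    and I: "I \<in> sets lborel" "I \<subseteq> A" "A \<subseteq> S"
    and le: "(\<integral>\<^sup>+ x. ennreal (f x) * indicator A x \<partial>lborel) \<le> ennreal C" and "0 \<le> C"
  shows "(LINT x:I|lborel. f x) \<le> C"
proof -
  have int_I: "integrable lborel (\<lambda>x. indicator I x * f x)"
    using set_integrable_subset[OF f(1) I(1)] I unfolding set_integrable_def by auto
  have "ennreal (LINT x:I|lborel. f x) = (\<integral>\<^sup>+ x. ennreal (indicator I x * f x) \<partial>lborel)"
    unfolding set_lebesgue_integral_def using nn_integral_eq_integral[OF int_I] f(2) by simp
  also have "\<dots> \<le> (\<integral>\<^sup>+ x. ennreal (f x) * indicator A x \<partial>lborel)"
    by (rule nn_integral_mono) (use I in \<open>auto simp: indicator_def\<close>)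
  finally have "ennreal (LINT x:I|lborel. f x) \<le> ennreal C" using le by simp
  moreover have "0 \<le> (LINT x:I|lborel. f x)"
    using f(2) unfolding set_lebesgue_integral_def by (simp add: integral_nonneg)
  ultimately show ?thesis
    using \<open>0 \<le> C\<close> by simp
qed

lemma fcap_nonneg: "0 \<le> c0 \<Longrightarrow> 0 \<le> t \<Longrightarrow> 0 \<le> fcap c0 t"
  unfolding fcap_def by simp

lemma fcap_mono: "0 \<le> c0 \<Longrightarrow> s \<le> t \<Longrightarrow> fcap c0 s \<le> fcap c0 t"
  unfolding fcap_def by (auto intro: mult_left_mono)

lemma fcap_scale_ge: "0 \<le> c0 \<Longrightarrow> 0 \<le> \<theta> \<Longrightarrow> \<theta> \<le> 1 \<Longrightarrow> \<theta> * fcap c0 s \<le> fcap c0 (\<theta> * s)"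
proof -
  assume "0 \<le> c0" "0 \<le> \<theta>" "\<theta> \<le> 1"
  then have "\<theta> * min s 1 \<le> min (\<theta> * s) 1"
  proof (cases "s \<le> 1")
    case True
    have "\<theta> * s \<le> 1"
      using True \<open>0 \<le> \<theta>\<close> \<open>\<theta> \<le> 1\<close> mult_le_one[of \<theta> s] mult_nonneg_nonpos[of \<theta> s]
      by (cases "0 \<le> s") auto
    then show ?thesis using True by simp
  next
    case False
    then show ?thesis
      using \<open>0 \<le> \<theta>\<close> \<open>\<theta> \<le> 1\<close> mult_left_mono[of 1 s \<theta>] by (auto simp: min_def)
  qed
  then have "c0 * (\<theta> * min s 1) \<le> c0 * min (\<theta> * s) 1"
    using \<open>0 \<le> c0\<close> by (rule mult_left_mono)
  then show ?thesis
    unfolding fcap_def by (simp add: mult.left_commute)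
qed

lemma fcap_ge_sub: "0 \<le> c0 \<Longrightarrow> 0 \<le> e \<Longrightarrow> s - e \<le> t \<Longrightarrow> fcap c0 s - c0 * e \<le> fcap c0 t"
proof -
  assume "0 \<le> c0" "0 \<le> e" "s - e \<le> t"
  then have "min s 1 - e \<le> min t 1" by (auto simp: min_def)
  then have "c0 * (min s 1 - e) \<le> c0 * min t 1" using \<open>0 \<le> c0\<close> by (rule mult_left_mono)
  then show ?thesis unfolding fcap_def by (simp add: algebra_simps)
qed

lemma borel_measurable_window_integral:
  fixes G :: "real \<Rightarrow> real"
  assumes [measurable]: "G \<in> borel_measurable lborel"
  shows "(\<lambda>y. \<integral>\<^sup>+ t. ennreal (G t * indicator {y-\<epsilon><..<y+\<epsilon>} t) \<partial>lborel) \<in> borel_measurable lborel"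
proof -
  have "(\<lambda>(y, t). ennreal (G t * indicator {y-\<epsilon><..<y+\<epsilon>} t))
      = (\<lambda>p. ennreal (G (snd p) * (if \<bar>fst p - snd p\<bar> < \<epsilon> then 1 else 0)))"
    by (auto simp: fun_eq_iff indicator_def abs_diff_less_iff)
  also have "\<dots> \<in> borel_measurable (lborel \<Otimes>\<^sub>M lborel)"
    by measurable
  finally show ?thesis by (rule lborel.borel_measurable_nn_integral)
qed

lemma nn_integral_window_integral:
  fixes G :: "real \<Rightarrow> real"
  assumes [measurable]: "G \<in> borel_measurable lborel" and G: "\<And>t. 0 \<le> G t" and "\<epsilon> > 0"
  shows "(\<integral>\<^sup>+ y. (\<integral>\<^sup>+ t. ennreal (G t * indicator {y-\<epsilon><..<y+\<epsilon>} t) \<partial>lborel) \<partial>lborel)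
    = ennreal (2 * \<epsilon>) * (\<integral>\<^sup>+ t. ennreal (G t) \<partial>lborel)"
proof -
  have "(\<lambda>(t, y). ennreal (G t * indicator {y-\<epsilon><..<y+\<epsilon>} t))
      = (\<lambda>p. ennreal (G (fst p) * (if \<bar>snd p - fst p\<bar> < \<epsilon> then 1 else 0)))"
    by (auto simp: fun_eq_iff indicator_def abs_diff_less_iff)
  also have "\<dots> \<in> borel_measurable (lborel \<Otimes>\<^sub>M lborel)"
    by measurable
  finally have "(\<integral>\<^sup>+ y. (\<integral>\<^sup>+ t. ennreal (G t * indicator {y-\<epsilon><..<y+\<epsilon>} t) \<partial>lborel) \<partial>lborel)
      = (\<integral>\<^sup>+ t. (\<integral>\<^sup>+ y. ennreal (G t * indicator {y-\<epsilon><..<y+\<epsilon>} t) \<partial>lborel) \<partial>lborel)"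
    by (rule lborel_pair.Fubini')
  also have "\<dots> = (\<integral>\<^sup>+ t. ennreal (G t) * ennreal (2 * \<epsilon>) \<partial>lborel)"
  proof (rule nn_integral_cong)
    fix t
    have "ennreal (G t * indicator {y-\<epsilon><..<y+\<epsilon>} t) = ennreal (G t) * indicator {t-\<epsilon><..<t+\<epsilon>} y" for y
      by (auto simp: indicator_def)
    then show "(\<integral>\<^sup>+ y. ennreal (G t * indicator {y-\<epsilon><..<y+\<epsilon>} t) \<partial>lborel) = ennreal (G t) * ennreal (2 * \<epsilon>)"
      using \<open>\<epsilon> > 0\<close> by (simp add: nn_integral_cmult)
  qed
  also have "\<dots> = ennreal (2 * \<epsilon>) * (\<integral>\<^sup>+ t. ennreal (G t) \<partial>lborel)"
    by (simp add: nn_integral_multc mult.commute)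
  finally show ?thesis .
qed

lemma fcap_ratio_le:
  assumes "0 \<le> c0" "0 \<le> m'" "m' \<le> M" "m' \<le> m" "0 < M"
  shows "fcap c0 (M / 2) / M * m' \<le> fcap c0 (m / 2)"
proof -
  have "fcap c0 (M / 2) / M * m' = m' / M * fcap c0 (M / 2)" by simp
  also have "\<dots> \<le> fcap c0 (m' / M * (M / 2))"
    using assms by (intro fcap_scale_ge) auto
  also have "\<dots> \<le> fcap c0 (m / 2)"
    using assms by (intro fcap_mono) auto
  finally show ?thesis .
qed

lemma window_integral_le_fcap:
  fixes g :: "real \<Rightarrow> real" and c d :: real
  defines "M \<equiv> LINT t:{c<..<d}|lborel. \<bar>g t\<bar>"
  assumes \<epsilon>: "\<epsilon> > 0" and c0: "c0 > 0" and "M > 0"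
    and sub: "a \<le> c - 2 * \<epsilon>" "d + 2 * \<epsilon> \<le> b" and g: "set_integrable lborel {a<..<b} g"
  shows "ennreal (fcap c0 (M / 2) / M) *
      (\<integral>\<^sup>+ t. ennreal (indicator {c<..<d} t * \<bar>g t\<bar> * indicator {y-\<epsilon><..<y+\<epsilon>} t) \<partial>lborel)
    \<le> ennreal (fcap c0 (\<epsilon> * avg_abs a b \<epsilon> g y)) * indicator {c-\<epsilon><..<d+\<epsilon>} y"
proof (cases "y \<in> {c-\<epsilon><..<d+\<epsilon>}")
  case False
  then have no_overlap: "indicator {c<..<d} t * \<bar>g t\<bar> * indicator {y-\<epsilon><..<y+\<epsilon>} t = 0" for t
    by (auto simp: indicator_def)
  show ?thesis unfolding no_overlap by simp
next
  case True
  let ?I = "{y-\<epsilon><..<y+\<epsilon>}"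
  have "?I \<subseteq> {a<..<b}" "{c<..<d} \<subseteq> {a<..<b}" using True sub \<epsilon> by auto
  then have g_I: "set_integrable lborel ?I (\<lambda>t. \<bar>g t\<bar>)" and g_cd: "set_integrable lborel {c<..<d} (\<lambda>t. \<bar>g t\<bar>)"
    using set_integrable_abs[OF set_integrable_subset[OF g]] by auto
  define mt where "mt = integral\<^sup>L lborel (\<lambda>t. indicator {c<..<d} t * \<bar>g t\<bar> * indicator ?I t)"
  have int_mt: "integrable lborel (\<lambda>t. indicator {c<..<d} t * \<bar>g t\<bar> * indicator ?I t)"
    using integrable_mult_indicator[OF _ g_cd[unfolded set_integrable_def], of ?I] by (simp add: mult.commute)
  have "0 \<le> mt" unfolding mt_def by (simp add: integral_nonneg)
  have "mt \<le> M"
    unfolding mt_def M_def set_lebesgue_integral_def using g_cd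
    by (intro integral_mono[OF int_mt]) (auto simp: set_integrable_def indicator_def)
  have "mt \<le> 2 * (\<epsilon> * avg_abs a b \<epsilon> g y)"
  proof -
    have "?I \<inter> {a<..<b} = ?I" using \<open>?I \<subseteq> {a<..<b}\<close> by auto
    then have avg: "2 * (\<epsilon> * avg_abs a b \<epsilon> g y) = (LINT t:?I|lborel. \<bar>g t\<bar>)"
      unfolding avg_abs_def using \<epsilon> by simp
    show ?thesis
      unfolding avg mt_def set_lebesgue_integral_def using g_I
      by (intro integral_mono[OF int_mt]) (auto simp: set_integrable_def indicator_def)
  qed
  with fcap_ratio_le[OF _ \<open>0 \<le> mt\<close> \<open>mt \<le> M\<close> this \<open>M > 0\<close>] c0
  have "ennreal (fcap c0 (M / 2) / M * mt) \<le> ennreal (fcap c0 (\<epsilon> * avg_abs a b \<epsilon> g y))"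
    by (intro ennreal_leI) simp
  moreover have "ennreal (fcap c0 (M / 2) / M * mt) = ennreal (fcap c0 (M / 2) / M) * ennreal mt"
    by (rule ennreal_mult) (use \<open>0 \<le> mt\<close> \<open>M > 0\<close> c0 in \<open>simp_all add: fcap_nonneg\<close>)
  moreover have "(\<integral>\<^sup>+ t. ennreal (indicator {c<..<d} t * \<bar>g t\<bar> * indicator ?I t) \<partial>lborel) = ennreal mt"
    unfolding mt_def by (rule nn_integral_eq_integral[OF int_mt]) simp
  ultimately show ?thesis using True by simp
qed

lemma nonlocal_cost_ge:
  fixes g :: "real \<Rightarrow> real"
  assumes \<epsilon>: "\<epsilon> > 0" and c0: "c0 > 0"
    and sub: "a \<le> c - 2 * \<epsilon>" "d + 2 * \<epsilon> \<le> b" and g: "set_integrable lborel {a<..<b} g"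
  obtains h where "h \<in> borel_measurable lborel"
    "\<And>y. h y \<le> ennreal (fcap c0 (\<epsilon> * avg_abs a b \<epsilon> g y)) * indicator {c-\<epsilon><..<d+\<epsilon>} y"
    "ennreal (2 * fcap c0 ((LINT t:{c<..<d}|lborel. \<bar>g t\<bar>) / 2)) \<le> ennreal (1 / \<epsilon>) * integral\<^sup>N lborel h"
proof -
  define G where "G t = indicator {c<..<d} t * \<bar>g t\<bar>" for t
  define M where "M = (LINT t:{c<..<d}|lborel. \<bar>g t\<bar>)"
  have "{c<..<d} \<subseteq> {a<..<b}" using \<epsilon> sub by auto
  then have int_G: "integrable lborel G"
    using set_integrable_abs[OF set_integrable_subset[OF g, of "{c<..<d}"]]
    unfolding set_integrable_def G_def by simp
  then have [measurable]: "G \<in> borel_measurable lborel" by (rule borel_measurable_integrable)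
  have M_eq: "M = integral\<^sup>L lborel G"
    unfolding M_def G_def set_lebesgue_integral_def by simp
  have "0 \<le> M" unfolding M_eq G_def by (simp add: integral_nonneg)
  show ?thesis
  proof (cases "M = 0")
    case True
    then show ?thesis using that[of "\<lambda>_. 0"] by (simp add: fcap_def M_def)
  next
    case False
    with \<open>0 \<le> M\<close> have "M > 0" by simp
    \<comment> \<open>\<open>W y\<close> is the mass of \<open>|g|\<close> on \<open>(c, d)\<close> seen through the window around \<open>y\<close>;
      by Fubini, \<open>W\<close> integrates to \<open>2 \<epsilon> M\<close>.\<close>
    define W where "W y = (\<integral>\<^sup>+ t. ennreal (G t * indicator {y-\<epsilon><..<y+\<epsilon>} t) \<partial>lborel)" for y
    define h where "h y = ennreal (fcap c0 (M / 2) / M) * W y" for y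
    have W_measurable: "W \<in> borel_measurable lborel"
      unfolding W_def[abs_def] by (rule borel_measurable_window_integral) measurable
    then have "h \<in> borel_measurable lborel"
      unfolding h_def[abs_def] by measurable
    moreover have "h y \<le> ennreal (fcap c0 (\<epsilon> * avg_abs a b \<epsilon> g y)) * indicator {c-\<epsilon><..<d+\<epsilon>} y" for y
      using window_integral_le_fcap[OF \<epsilon> c0 \<open>M > 0\<close>[unfolded M_def] sub g]
      unfolding h_def W_def G_def M_def .
    moreover have "ennreal (1 / \<epsilon>) * integral\<^sup>N lborel h = ennreal (2 * fcap c0 (M / 2))"
    proof -
      have "integral\<^sup>N lborel W = ennreal (2 * \<epsilon>) * ennreal M"
        unfolding W_def[abs_def] using nn_integral_window_integral[of G \<epsilon>] \<epsilon>
          nn_integral_eq_integral[OF int_G] M_eq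
        by (simp add: G_def)
      moreover have "integral\<^sup>N lborel h = ennreal (fcap c0 (M / 2) / M) * integral\<^sup>N lborel W"
        unfolding h_def[abs_def] using W_measurable by (rule nn_integral_cmult)
      ultimately have "ennreal (1 / \<epsilon>) * integral\<^sup>N lborel h
          = ennreal (1 / \<epsilon>) * (ennreal (fcap c0 (M / 2) / M) * (ennreal (2 * \<epsilon>) * ennreal M))"
        by simp
      also have "\<dots> = ennreal (1 / \<epsilon>) * (ennreal (fcap c0 (M / 2) / M) * ennreal (2 * \<epsilon> * M))"
        by (subst ennreal_mult[symmetric]) (use \<epsilon> \<open>M > 0\<close> in auto)
      also have "\<dots> = ennreal (1 / \<epsilon> * (fcap c0 (M / 2) / M * (2 * \<epsilon> * M)))"
        using \<epsilon> \<open>M > 0\<close> c0 by (simp add: ennreal_mult[symmetric] fcap_nonneg)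
      also have "1 / \<epsilon> * (fcap c0 (M / 2) / M * (2 * \<epsilon> * M)) = 2 * fcap c0 (M / 2)"
        using \<epsilon> \<open>M > 0\<close> by (simp add: field_simps)
      finally show ?thesis .
    qed
    ultimately show ?thesis using that unfolding M_def by simp
  qed
qed

lemma finite_separated_neighbourhoods:
  fixes F A :: "real set"
  assumes "finite F" "F \<subseteq> A" "open A"
  obtains \<rho> where "\<rho> > 0" "\<And>x. x \<in> F \<Longrightarrow> {x-\<rho><..<x+\<rho>} \<subseteq> A"
    "\<And>x y. x \<in> F \<Longrightarrow> y \<in> F \<Longrightarrow> x \<noteq> y \<Longrightarrow> 2 * \<rho> \<le> \<bar>x - y\<bar>"
proof -
  have "\<forall>x\<in>F. \<exists>e>0. ball x e \<subseteq> A"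
    using assms(2,3) open_contains_ball by blast
  then obtain e where e: "\<And>x. x \<in> F \<Longrightarrow> e x > 0 \<and> ball x (e x) \<subseteq> A"
    by metis
  define D where "D = insert 1 (e ` F \<union> (\<lambda>(x, y). \<bar>x - y\<bar> / 2) ` {(x, y) \<in> F \<times> F. x \<noteq> y})"
  have "finite {(x, y) \<in> F \<times> F. x \<noteq> y}"
    using assms(1) by (auto intro: finite_subset[of _ "F \<times> F"])
  then have D: "finite D" "D \<noteq> {}" "\<And>r. r \<in> D \<Longrightarrow> r > 0"
    using assms(1) e unfolding D_def by auto
  show ?thesis
  proof
    show "Min D > 0" using D by simp
    show "{x - Min D<..<x + Min D} \<subseteq> A" if "x \<in> F" for x
    proof -
      have "Min D \<le> e x" using D that unfolding D_def by (intro Min_le) auto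
      then have "{x - Min D<..<x + Min D} \<subseteq> ball x (e x)"
        by (auto simp: dist_real_def)
      then show ?thesis using e that by blast
    qed
    show "2 * Min D \<le> \<bar>x - y\<bar>" if "x \<in> F" "y \<in> F" "x \<noteq> y" for x y
    proof -
      have "\<bar>x - y\<bar> / 2 \<in> D" using that unfolding D_def by force
      then show ?thesis using D Min_le by fastforce
    qed
  qed
qed

lemma sum_nn_integral_le_of_separated:
  fixes H :: "real \<Rightarrow> real \<Rightarrow> ennreal" and f :: "real \<Rightarrow> ennreal"
  assumes F: "finite F" and nbhd: "\<And>x. x \<in> F \<Longrightarrow> {x-\<rho><..<x+\<rho>} \<subseteq> A"
    and sep: "\<And>x y. x \<in> F \<Longrightarrow> y \<in> F \<Longrightarrow> x \<noteq> y \<Longrightarrow> 2 * \<rho> \<le> \<bar>x - y\<bar>"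
    and H: "\<And>x. x \<in> F \<Longrightarrow> H x \<in> borel_measurable lborel"
    and supp: "\<And>x y. x \<in> F \<Longrightarrow> y \<notin> {x-\<rho><..<x+\<rho>} \<Longrightarrow> H x y = 0"
    and le: "\<And>x y. x \<in> F \<Longrightarrow> H x y \<le> f y"
  shows "(\<Sum>x\<in>F. integral\<^sup>N lborel (H x)) \<le> (\<integral>\<^sup>+ y. f y * indicator A y \<partial>lborel)"
proof -
  have "(\<Sum>x\<in>F. H x y) \<le> f y * indicator A y" for y
  proof (cases "\<exists>x0\<in>F. y \<in> {x0-\<rho><..<x0+\<rho>}")
    case False
    then show ?thesis using supp by simp
  next
    case True
    then obtain x0 where x0: "x0 \<in> F" "y \<in> {x0-\<rho><..<x0+\<rho>}" by blast
    have "H x y = 0" if "x \<in> F - {x0}" for x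
    proof (rule supp)
      show "y \<notin> {x-\<rho><..<x+\<rho>}"
        using x0 sep[of x x0] that by auto
    qed (use that in auto)
    then have "(\<Sum>x\<in>F. H x y) = H x0 y"
      using sum.remove[OF F x0(1), of "\<lambda>x. H x y"] by simp
    then show ?thesis using le[OF x0(1)] nbhd[OF x0(1)] x0(2) by auto
  qed
  then have "(\<integral>\<^sup>+ y. (\<Sum>x\<in>F. H x y) \<partial>lborel) \<le> (\<integral>\<^sup>+ y. f y * indicator A y \<partial>lborel)"
    by (rule nn_integral_mono)
  then show ?thesis using nn_integral_sum[of F H lborel] H by simp
qed

lemma abs_integral_bump_at'_le_mass:
  fixes U u' g :: "real \<Rightarrow> real"
  assumes adm: "E_adm a b K U \<Gamma> u' g"
    and \<eta>: "\<eta> > 0" "a < x - \<eta>" "x + \<eta> < b" and I: "{x-\<eta><..<x+\<eta>} \<subseteq> A" and A: "A \<subseteq> {a<..<b}"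
    and T: "(\<integral>\<^sup>+ y. ennreal ((u' y - g y)\<^sup>2) * indicator A y \<partial>lborel) \<le> ennreal C" "0 \<le> C"
    and lam: "lam > 0" "C / (2 * lam) + lam * \<eta> \<le> d"
  shows "\<bar>LINT y:{a<..<b}|lborel. U y * bump_at' x \<eta> y\<bar> \<le> (LINT t:{x-\<eta><..<x+\<eta>}|lborel. \<bar>g t\<bar>) + d"
proof -
  let ?I = "{x-\<eta><..<x+\<eta>}"
  from adm have wd: "weak_deriv a b U u'" and u': "set_integrable lborel {a<..<b} u'"
    and g: "set_integrable lborel {a<..<b} g"
    and sq: "set_integrable lborel {a<..<b} (\<lambda>y. (u' y - g y)\<^sup>2)"
    unfolding E_adm_def by auto
  have "?I \<subseteq> {a<..<b}" using \<eta> by auto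
  then have g_I: "set_integrable lborel ?I (\<lambda>t. \<bar>g t\<bar>)"
    and diff_I: "set_integrable lborel ?I (\<lambda>t. u' t - g t)"
    and sq_I: "set_integrable lborel ?I (\<lambda>t. (u' t - g t)\<^sup>2)"
    using set_integrable_subset[OF g] set_integrable_subset[OF set_integral_diff(1)[OF u' g]]
      set_integrable_subset[OF sq]
    by (auto intro: set_integrable_abs)
  have "\<bar>LINT y:{a<..<b}|lborel. U y * bump_at' x \<eta> y\<bar> \<le> (LINT t:?I|lborel. \<bar>u' t\<bar>)"
    by (rule abs_integral_bump_at'_le_weak_deriv[OF wd u' \<eta>])
  also have "\<dots> \<le> (LINT t:?I|lborel. \<bar>g t\<bar> + \<bar>u' t - g t\<bar>)"
    using set_integrable_abs[OF set_integrable_subset[OF u'], of ?I] \<open>?I \<subseteq> {a<..<b}\<close>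
      g_I set_integrable_abs[OF diff_I]
    by (intro set_integral_mono set_integral_add) auto
  also have "\<dots> = (LINT t:?I|lborel. \<bar>g t\<bar>) + (LINT t:?I|lborel. \<bar>u' t - g t\<bar>)"
    by (rule set_integral_add(2)[OF g_I set_integrable_abs[OF diff_I]])
  also have "(LINT t:?I|lborel. \<bar>u' t - g t\<bar>) \<le> (LINT t:?I|lborel. (u' t - g t)\<^sup>2) / (2 * lam) + lam * \<eta>"
    using set_integral_abs_le_Young[OF diff_I sq_I _ lam(1)] \<eta> by simp
  also have "(LINT t:?I|lborel. (u' t - g t)\<^sup>2) \<le> C"
    by (rule set_integral_le_of_nn_integral_le[OF sq _ _ I A T]) simp_all
  finally show ?thesis
    using lam by (smt (verit) divide_right_mono zero_le_mult_iff)
qed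

lemma nonlocal_term_ge_jumps:
  fixes g J \<eta> :: "real \<Rightarrow> real"
  assumes c0: "c0 > 0" and F: "finite F" and A: "A \<subseteq> {a<..<b}"
    and nbhd: "\<And>x. x \<in> F \<Longrightarrow> {x-\<rho><..<x+\<rho>} \<subseteq> A"
    and sep: "\<And>x y. x \<in> F \<Longrightarrow> y \<in> F \<Longrightarrow> x \<noteq> y \<Longrightarrow> 2 * \<rho> \<le> \<bar>x - y\<bar>"
    and \<eta>: "\<And>x. x \<in> F \<Longrightarrow> 0 < \<eta> x \<and> \<eta> x < \<rho> / 2" and \<epsilon>: "0 < \<epsilon>" "\<epsilon> < \<rho> / 8"
    and g: "set_integrable lborel {a<..<b} g" and d: "0 \<le> d"
    and mass: "\<And>x. x \<in> F \<Longrightarrow> \<bar>J x\<bar> - 3 * d \<le> (LINT t:{x - \<eta> x<..<x + \<eta> x}|lborel. \<bar>g t\<bar>)"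
  shows "ennreal (\<Sum>x\<in>F. 2 * fcap c0 (\<bar>J x\<bar> / 2) - 3 * c0 * d)
    \<le> ennreal (1 / \<epsilon>) * (\<integral>\<^sup>+ y. ennreal (fcap c0 (\<epsilon> * avg_abs a b \<epsilon> g y)) * indicator A y \<partial>lborel)"
proof -
  define fe where "fe y = ennreal (fcap c0 (\<epsilon> * avg_abs a b \<epsilon> g y))" for y
  define M where "M x = (LINT t:{x - \<eta> x<..<x + \<eta> x}|lborel. \<bar>g t\<bar>)" for x
  have "\<exists>h. h \<in> borel_measurable lborel \<and>
      (\<forall>y. h y \<le> fe y * indicator {x - \<eta> x - \<epsilon><..<x + \<eta> x + \<epsilon>} y) \<and>
      ennreal (2 * fcap c0 (M x / 2)) \<le> ennreal (1 / \<epsilon>) * integral\<^sup>N lborel h" if x: "x \<in> F" for x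
  proof -
    have "x - \<eta> x - 2 * \<epsilon> \<in> A" "x + \<eta> x + 2 * \<epsilon> \<in> A"
      using nbhd[OF x] \<eta>[OF x] \<epsilon> by auto
    then have "a \<le> x - \<eta> x - 2 * \<epsilon>" "x + \<eta> x + 2 * \<epsilon> \<le> b"
      using A by auto
    from nonlocal_cost_ge[OF \<epsilon>(1) c0 this g] show ?thesis
      unfolding fe_def M_def by metis
  qed
  then have "\<exists>H. \<forall>x\<in>F. H x \<in> borel_measurable lborel \<and>
      (\<forall>y. H x y \<le> fe y * indicator {x - \<eta> x - \<epsilon><..<x + \<eta> x + \<epsilon>} y) \<and>
      ennreal (2 * fcap c0 (M x / 2)) \<le> ennreal (1 / \<epsilon>) * integral\<^sup>N lborel (H x)"
    by (intro bchoice) blast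
  then obtain H where H_meas: "\<And>x. x \<in> F \<Longrightarrow> H x \<in> borel_measurable lborel"
    and H_le: "\<And>x y. x \<in> F \<Longrightarrow> H x y \<le> fe y * indicator {x - \<eta> x - \<epsilon><..<x + \<eta> x + \<epsilon>} y"
    and H_int: "\<And>x. x \<in> F \<Longrightarrow> ennreal (2 * fcap c0 (M x / 2)) \<le> ennreal (1 / \<epsilon>) * integral\<^sup>N lborel (H x)"
    by blast
  have H_supp: "H x y = 0" if "x \<in> F" "y \<notin> {x-\<rho><..<x+\<rho>}" for x y
  proof -
    have "y \<notin> {x - \<eta> x - \<epsilon><..<x + \<eta> x + \<epsilon>}"
      using that \<eta>[OF that(1)] \<epsilon> by auto
    then show ?thesis using H_le[OF that(1), of y] by simp
  qed
  have "(\<Sum>x\<in>F. 2 * fcap c0 (\<bar>J x\<bar> / 2) - 3 * c0 * d) \<le> (\<Sum>x\<in>F. 2 * fcap c0 (M x / 2))"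
  proof (rule sum_mono)
    fix x assume "x \<in> F"
    have "fcap c0 (\<bar>J x\<bar> / 2) - c0 * (3 * d / 2) \<le> fcap c0 (M x / 2)"
      using c0 d mass[OF \<open>x \<in> F\<close>] unfolding M_def by (intro fcap_ge_sub) auto
    then show "2 * fcap c0 (\<bar>J x\<bar> / 2) - 3 * c0 * d \<le> 2 * fcap c0 (M x / 2)" by simp
  qed
  then have "ennreal (\<Sum>x\<in>F. 2 * fcap c0 (\<bar>J x\<bar> / 2) - 3 * c0 * d)
      \<le> (\<Sum>x\<in>F. ennreal (2 * fcap c0 (M x / 2)))"
    using c0 by (simp add: ennreal_leI sum_ennreal fcap_nonneg M_def set_lebesgue_integral_def integral_nonneg)
  also have "\<dots> \<le> (\<Sum>x\<in>F. ennreal (1 / \<epsilon>) * integral\<^sup>N lborel (H x))"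
    by (rule sum_mono) (rule H_int)
  also have "\<dots> = ennreal (1 / \<epsilon>) * (\<Sum>x\<in>F. integral\<^sup>N lborel (H x))"
    by (rule sum_distrib_left[symmetric])
  also have "\<dots> \<le> ennreal (1 / \<epsilon>) * (\<integral>\<^sup>+ y. fe y * indicator A y \<partial>lborel)"
  proof (intro mult_left_mono sum_nn_integral_le_of_separated[OF F nbhd sep H_meas H_supp])
    show "H x y \<le> fe y" if "x \<in> F" for x y
      using H_le[OF that, of y] by (cases "y \<in> {x - \<eta> x - \<epsilon><..<x + \<eta> x + \<epsilon>}") auto
  qed auto
  finally show ?thesis unfolding fe_def .
qed

lemma E_eps_ge_jumps:
  fixes U :: "real \<Rightarrow> real" and J \<eta> :: "real \<Rightarrow> real"
  assumes c0: "c0 > 0" and F: "finite F" and A: "A \<subseteq> {a<..<b}"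
    and nbhd: "\<And>x. x \<in> F \<Longrightarrow> {x-\<rho><..<x+\<rho>} \<subseteq> A"
    and sep: "\<And>x y. x \<in> F \<Longrightarrow> y \<in> F \<Longrightarrow> x \<noteq> y \<Longrightarrow> 2 * \<rho> \<le> \<bar>x - y\<bar>"
    and \<eta>: "\<And>x. x \<in> F \<Longrightarrow> 0 < \<eta> x \<and> \<eta> x < \<rho> / 2 \<and> lam * \<eta> x \<le> d / 2"
    and \<epsilon>: "0 < \<epsilon>" "\<epsilon> < \<rho> / 8" and d: "d > 0" and lam: "lam > 0" and C: "C / (2 * lam) \<le> d / 2"
    and detect: "\<And>x. x \<in> F \<Longrightarrow> \<bar>J x\<bar> - 2 * d \<le> \<bar>LINT y:{a<..<b}|lborel. U y * bump_at' x (\<eta> x) y\<bar>"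
    and t: "t \<le> C" "t \<le> (\<Sum>x\<in>F. 2 * fcap c0 (\<bar>J x\<bar> / 2) - 3 * c0 * d)"
  shows "ennreal t \<le> E_eps a b K c0 \<epsilon> U \<Gamma> A"
  unfolding E_eps_def
proof (rule INF_greatest, clarify)
  fix u' g assume adm: "E_adm a b K U \<Gamma> u' g"
  define T1 where "T1 = (\<integral>\<^sup>+ y. ennreal ((u' y - g y)\<^sup>2) * indicator A y \<partial>lborel)"
  define T2 where "T2 = (\<integral>\<^sup>+ y. ennreal (fcap c0 (\<epsilon> * avg_abs a b \<epsilon> g y)) * indicator A y \<partial>lborel)"
  have energy: "energy a b c0 \<epsilon> u' g A = T1 + ennreal (1 / \<epsilon>) * T2"
    unfolding energy_def T1_def T2_def ..
  show "ennreal t \<le> energy a b c0 \<epsilon> (fst (u', g)) (snd (u', g)) A"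
  proof (cases "ennreal C \<le> T1")
    case True
    have "ennreal t \<le> ennreal C" using t(1) by (rule ennreal_leI)
    also have "\<dots> \<le> T1" by (rule True)
    finally show ?thesis by (simp add: energy add_increasing2)
  next
    case False
    then have "T1 < ennreal C" by (simp add: not_le)
    have "0 < ennreal C" using zero_le[of T1] \<open>T1 < ennreal C\<close> by (rule le_less_trans)
    then have "0 \<le> C" "T1 \<le> ennreal C" using \<open>T1 < ennreal C\<close> by auto
    have "\<bar>J x\<bar> - 3 * d \<le> (LINT t:{x - \<eta> x<..<x + \<eta> x}|lborel. \<bar>g t\<bar>)" if x: "x \<in> F" for x
    proof -
      have "x - \<rho> / 2 \<in> A" "x + \<rho> / 2 \<in> A" and I: "{x - \<eta> x<..<x + \<eta> x} \<subseteq> A"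
        using nbhd[OF x] \<eta>[OF x] by auto
      then have "a < x - \<eta> x" "x + \<eta> x < b" using A \<eta>[OF x] by auto
      moreover have "C / (2 * lam) + lam * \<eta> x \<le> d" using C \<eta>[OF x] by simp
      ultimately have "\<bar>LINT y:{a<..<b}|lborel. U y * bump_at' x (\<eta> x) y\<bar>
          \<le> (LINT t:{x - \<eta> x<..<x + \<eta> x}|lborel. \<bar>g t\<bar>) + d"
        using abs_integral_bump_at'_le_mass[OF adm _ _ _ I A \<open>T1 \<le> ennreal C\<close>[unfolded T1_def] \<open>0 \<le> C\<close> lam(1)]
          \<eta>[OF x] by blast
      then show ?thesis using detect[OF x] by linarith
    qed
    then have "ennreal (\<Sum>x\<in>F. 2 * fcap c0 (\<bar>J x\<bar> / 2) - 3 * c0 * d) \<le> ennreal (1 / \<epsilon>) * T2"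
      unfolding T2_def using adm d unfolding E_adm_def
      by (intro nonlocal_term_ge_jumps[OF c0 F A nbhd sep _ \<epsilon>, where \<eta>=\<eta>]) (use \<eta> in auto)
    then have "ennreal t \<le> ennreal (1 / \<epsilon>) * T2"
      using ennreal_leI[OF t(2)] by (rule order_trans[rotated])
    then show ?thesis by (simp add: energy add_increasing)
  qed
qed

lemma eventually_E_eps_ge:
  fixes u :: "real \<Rightarrow> real" and U :: "real \<Rightarrow> real \<Rightarrow> real" and \<Gamma> :: "real \<Rightarrow> smeasure"
  assumes c0: "c0 > 0" and A: "open A" "A \<subseteq> {a<..<b}"
    and u: "set_integrable lborel {a<..<b} u"
    and U: "\<And>\<epsilon>. \<epsilon> > 0 \<Longrightarrow> set_integrable lborel {a<..<b} (U \<epsilon>)"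
    and conv: "((\<lambda>\<epsilon>. LINT x:{a<..<b}|lborel. \<bar>U \<epsilon> x - u x\<bar>) \<longlongrightarrow> 0) (at_right 0)"
    and F: "finite F" "F \<subseteq> jump_set a b u \<inter> A"
    and t: "0 \<le> t" "t < 2 * (\<Sum>x\<in>F. fcap c0 (\<bar>jump u x\<bar> / 2))"
  shows "eventually (\<lambda>\<epsilon>. ennreal t \<le> E_eps a b K c0 \<epsilon> (U \<epsilon>) (\<Gamma> \<epsilon>) A) (at_right 0)"
proof -
  define S where "S = (\<Sum>x\<in>F. fcap c0 (\<bar>jump u x\<bar> / 2))"
  have "F \<noteq> {}" using t by auto
  then have "card F > 0" using F(1) by (simp add: card_gt_0_iff)
  \<comment> \<open>The losses \<open>3 c0 d\<close> per jump point use up half of the gap between \<open>t\<close> and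
    \<open>2 S\<close>; an elastic energy of at least \<open>C > t\<close> already suffices on its own.\<close>
  define d where "d = (2 * S - t) / (6 * card F * c0)"
  define C where "C = t + 1"
  define lam where "lam = C / d"
  have d: "d > 0" using t \<open>card F > 0\<close> c0 unfolding d_def S_def by simp
  have lam: "lam > 0" and C: "C / (2 * lam) \<le> d / 2"
    using t d unfolding lam_def C_def by (simp_all add: field_simps)
  obtain \<rho> where \<rho>: "\<rho> > 0" and nbhd: "\<And>x. x \<in> F \<Longrightarrow> {x-\<rho><..<x+\<rho>} \<subseteq> A"
    and sep: "\<And>x y. x \<in> F \<Longrightarrow> y \<in> F \<Longrightarrow> x \<noteq> y \<Longrightarrow> 2 * \<rho> \<le> \<bar>x - y\<bar>"
    using finite_separated_neighbourhoods[OF F(1) _ A(1)] F(2) by blast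
  have "min (\<rho> / 2) (d / (2 * lam)) > 0" using \<rho> d lam by simp
  with exists_bump_radii_detecting_jumps[OF _ u d] F(2)
  obtain \<eta> where \<eta>: "\<And>x. x \<in> F \<Longrightarrow> 0 < \<eta> x \<and> \<eta> x < min (\<rho> / 2) (d / (2 * lam)) \<and>
      a < x - \<eta> x \<and> x + \<eta> x < b \<and> \<bar>(LINT y:{a<..<b}|lborel. u y * bump_at' x (\<eta> x) y) + jump u x\<bar> \<le> d"
    by blast
  have \<eta>_small: "0 < \<eta> x \<and> \<eta> x < \<rho> / 2 \<and> lam * \<eta> x \<le> d / 2" if "x \<in> F" for x
    using \<eta>[OF that] lam by (auto simp: field_simps)
  have "eventually (\<lambda>\<epsilon>. 4 / \<eta> x * (LINT y:{a<..<b}|lborel. \<bar>U \<epsilon> y - u y\<bar>) < d) (at_right 0)" for x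
    using tendsto_mult_right_zero[OF conv, of "4 / \<eta> x"] d by (auto dest: order_tendstoD(2))
  then have "eventually (\<lambda>\<epsilon>. \<epsilon> \<in> {0<..<\<rho> / 8} \<and>
      (\<forall>x\<in>F. 4 / \<eta> x * (LINT y:{a<..<b}|lborel. \<bar>U \<epsilon> y - u y\<bar>) < d)) (at_right 0)"
    using \<rho> by (intro eventually_conj eventually_at_right_real eventually_ball_finite[OF F(1)]) auto
  then show ?thesis
  proof (rule eventually_mono, elim conjE)
    fix \<epsilon> assume \<epsilon>: "\<epsilon> \<in> {0<..<\<rho> / 8}"
      and close: "\<forall>x\<in>F. 4 / \<eta> x * (LINT y:{a<..<b}|lborel. \<bar>U \<epsilon> y - u y\<bar>) < d"
    show "ennreal t \<le> E_eps a b K c0 \<epsilon> (U \<epsilon>) (\<Gamma> \<epsilon>) A"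
    proof (rule E_eps_ge_jumps[OF c0 F(1) A(2) nbhd sep, where \<eta>=\<eta> and lam=lam and d=d and C=C])
      show "\<bar>jump u x\<bar> - 2 * d \<le> \<bar>LINT y:{a<..<b}|lborel. U \<epsilon> y * bump_at' x (\<eta> x) y\<bar>" if x: "x \<in> F" for x
      proof -
        have "\<bar>(LINT y:{a<..<b}|lborel. U \<epsilon> y * bump_at' x (\<eta> x) y) - (LINT y:{a<..<b}|lborel. u y * bump_at' x (\<eta> x) y)\<bar>
            \<le> 4 / \<eta> x * (LINT y:{a<..<b}|lborel. \<bar>U \<epsilon> y - u y\<bar>)"
          using \<epsilon> \<eta>[OF x]
          by (intro abs_set_integral_diff_mult_le[OF u U borel_measurable_bump_at' abs_bump_at'_le]) auto
        then show ?thesis using close x \<eta>[OF x] by fastforce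
      qed
      have "(\<Sum>x\<in>F. 2 * fcap c0 (\<bar>jump u x\<bar> / 2) - 3 * c0 * d) = 2 * S - card F * (3 * c0 * d)"
        unfolding S_def by (simp add: sum_subtractf sum_distrib_left)
      also have "card F * (3 * c0 * d) = (2 * S - t) / 2"
        unfolding d_def using \<open>card F > 0\<close> c0 by (simp add: field_simps)
      finally have sum_eq: "(\<Sum>x\<in>F. 2 * fcap c0 (\<bar>jump u x\<bar> / 2) - 3 * c0 * d) = 2 * S - (2 * S - t) / 2" .
      have "t < 2 * S" using t(2) unfolding S_def .
      then show "t \<le> (\<Sum>x\<in>F. 2 * fcap c0 (\<bar>jump u x\<bar> / 2) - 3 * c0 * d)"
        unfolding sum_eq by (simp add: field_simps)
    qed (use \<eta>_small \<epsilon> d lam C in \<open>simp_all add: C_def\<close>)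
  qed
qed

lemma Liminf_E_eps_ge_finite_jumps:
  fixes u :: "real \<Rightarrow> real" and U :: "real \<Rightarrow> real \<Rightarrow> real" and \<Gamma> :: "real \<Rightarrow> smeasure"
  assumes c0: "c0 > 0" and A: "open A" "A \<subseteq> {a<..<b}"
    and u: "set_integrable lborel {a<..<b} u"
    and U: "\<And>\<epsilon>. \<epsilon> > 0 \<Longrightarrow> set_integrable lborel {a<..<b} (U \<epsilon>)"
    and conv: "((\<lambda>\<epsilon>. LINT x:{a<..<b}|lborel. \<bar>U \<epsilon> x - u x\<bar>) \<longlongrightarrow> 0) (at_right 0)"
    and F: "finite F" "F \<subseteq> jump_set a b u \<inter> A"
  shows "2 * (\<Sum>x\<in>F. ennreal (fcap c0 (\<bar>jump u x\<bar> / 2)))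
    \<le> Liminf (at_right 0) (\<lambda>\<epsilon>. E_eps a b K c0 \<epsilon> (U \<epsilon>) (\<Gamma> \<epsilon>) A)"
proof -
  define S where "S = (\<Sum>x\<in>F. fcap c0 (\<bar>jump u x\<bar> / 2))"
  have "0 \<le> S" unfolding S_def using c0 by (intro sum_nonneg fcap_nonneg) auto
  have "2 * (\<Sum>x\<in>F. ennreal (fcap c0 (\<bar>jump u x\<bar> / 2))) = ennreal (2 * S)"
    unfolding S_def using c0 by (simp add: sum_ennreal fcap_nonneg ennreal_mult sum_nonneg)
  moreover have "ennreal (2 * S) \<le> Liminf (at_right 0) (\<lambda>\<epsilon>. E_eps a b K c0 \<epsilon> (U \<epsilon>) (\<Gamma> \<epsilon>) A)"
    unfolding le_Liminf_iff
  proof (intro allI impI)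
    fix y assume "y < ennreal (2 * S)"
    then have "y \<noteq> top" by auto
    define r where "r = enn2real y"
    have r: "y = ennreal r" "0 \<le> r" unfolding r_def using \<open>y \<noteq> top\<close> by (auto simp: ennreal_enn2real_if)
    then have "r < 2 * S" using \<open>y < ennreal (2 * S)\<close> ennreal_less_iff by simp
    have "eventually (\<lambda>\<epsilon>. ennreal ((r + 2 * S) / 2) \<le> E_eps a b K c0 \<epsilon> (U \<epsilon>) (\<Gamma> \<epsilon>) A) (at_right 0)"
      using r \<open>r < 2 * S\<close> \<open>0 \<le> S\<close>
      by (intro eventually_E_eps_ge[OF c0 A u U conv F]) (auto simp: S_def)
    moreover have "y < ennreal ((r + 2 * S) / 2)" using r \<open>r < 2 * S\<close> by (simp add: ennreal_lessI)
    ultimately show "eventually (\<lambda>\<epsilon>. y < E_eps a b K c0 \<epsilon> (U \<epsilon>) (\<Gamma> \<epsilon>) A) (at_right 0)"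
      by (auto elim: eventually_mono)
  qed
  ultimately show ?thesis by simp
qed

theorem mainTheorem7:
  fixes a b c0 K :: real and A :: "real set" and u u' g :: "real \<Rightarrow> real"
    and \<gamma> Dsu :: smeasure
  assumes "a < b" and "c0 > 0" and "K > 0"
    and "open A" and "A \<subseteq> {a<..<b}"
    and "BV_decomp a b u u' Dsu"
    and "smeas a b \<gamma>"
    and "set_integrable lborel {a<..<b} g"
    and "\<forall>S\<in>sets borel. sval \<gamma> S = sval Dsu S + (LINT x:(S \<inter> {a<..<b})|lborel. g x)"
    and "set_integrable lborel {a<..<b} (\<lambda>x. (u' x - g x)\<^sup>2)"
  shows "E_low a b K c0 u \<gamma> A \<ge>
           2 * (\<Sum>\<^sub>\<infinity> x\<in>jump_set a b u \<inter> A. ennreal (fcap c0 (\<bar>jump u x\<bar> / 2)))"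
proof -
  have u: "set_integrable lborel {a<..<b} u" using assms(6) unfolding BV_decomp_def by auto
  have jumps_as_SUP: "(\<Sum>\<^sub>\<infinity> x\<in>jump_set a b u \<inter> A. ennreal (fcap c0 (\<bar>jump u x\<bar> / 2))) =
      (SUP F\<in>{F. finite F \<and> F \<subseteq> jump_set a b u \<inter> A}. (\<Sum>x\<in>F. ennreal (fcap c0 (\<bar>jump u x\<bar> / 2))))"
    by (rule nonneg_infsum_complete) simp
  show ?thesis
    unfolding E_low_def jumps_as_SUP SUP_mult_left_ennreal
  proof (intro INF_greatest SUP_least, goal_cases)
    case 1
    then show ?case
      by (auto intro!: Liminf_E_eps_ge_finite_jumps[OF assms(2,4,5) u])
  qed
qed

end
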